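(* There is a deterministic Congested Clique algorithm which, on an input graph $G$ with arboricity $a\ge 2$, terminates within $O(a)$ rounds with every vertex knowing the entire edge set of $G$. Consequently, every problem whose solution is a computable function of the (unweighted) input graph $G$ can be solved deterministically in $O(a)$ rounds in the Congested Clique, with each vertex outputting its part of a common solution.
   Context: Congested Clique model: there are $n$ processors (vertices) with distinct IDs of $O(\log n)$ bits; computation proceeds in synchronous rounds; in each round every pair of vertices may exchange a message of $O(\log n)$ bits; local computation is unrestricted. The input is a graph $G=(V,E')$ on the same vertex set; each vertex initially knows its incident edges in $G$, and $a$ is known to all vertices. The arboricity of a graph is the minimum number of forests whose union covers its edge set. *)

theory Defs
  imports Main
begin

text \<open>Vertices are the processor IDs 0..n-1. A graph is given by an adjacency
  predicate E (symmetric, irreflexive, on vertex set {..<n}).\<close>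

definition simple_graph :: "nat \<Rightarrow> (nat \<Rightarrow> nat \<Rightarrow> bool) \<Rightarrow> bool" where
  "simple_graph n E \<longleftrightarrow> (\<forall>u v. E u v \<longrightarrow> u < n \<and> v < n \<and> u \<noteq> v \<and> E v u)"

definition graph_edges :: "(nat \<Rightarrow> nat \<Rightarrow> bool) \<Rightarrow> nat set set" where
  "graph_edges E = {{u, v} | u v. E u v}"

definition has_cycle :: "nat set set \<Rightarrow> bool" where
  "has_cycle F \<longleftrightarrow> (\<exists>vs. 3 \<le> length vs \<and> distinct vs \<and>
      (\<forall>i < length vs. {vs ! i, vs ! ((i + 1) mod length vs)} \<in> F))"

definition forest :: "nat set set \<Rightarrow> bool" where
  "forest F \<longleftrightarrow> (\<forall>e \<in> F. card e = 2) \<and> \<not> has_cycle F"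

definition arboricity :: "(nat \<Rightarrow> nat \<Rightarrow> bool) \<Rightarrow> nat" where
  "arboricity E = (LEAST k. \<exists>F :: nat \<Rightarrow> nat set set.
      (\<forall>i < k. forest (F i)) \<and> (\<Union>i < k. F i) = graph_edges E)"

text \<open>Local states are arbitrary finite data (encoded as lists of naturals);
  local computation is unrestricted (arbitrary HOL functions). Messages are
  natural numbers; the bandwidth restriction requires them to have O(log n) bits.
  All components may depend on n and a (known to all vertices) and on the
  vertex's own ID.\<close>

type_synonym cc_state = "nat list"

record cc_alg =
  cc_init  :: "nat \<Rightarrow> nat \<Rightarrow> nat \<Rightarrow> (nat \<Rightarrow> bool) \<Rightarrow> cc_state"
    \<comment> \<open>n, a, own ID, own adjacency \<open>\<mapsto>\<close> initial state\<close>
  cc_msg   :: "nat \<Rightarrow> nat \<Rightarrow> nat \<Rightarrow> cc_state \<Rightarrow> nat \<Rightarrow> nat"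
    \<comment> \<open>n, a, own ID, state, recipient \<open>\<mapsto>\<close> message\<close>
  cc_trans :: "nat \<Rightarrow> nat \<Rightarrow> nat \<Rightarrow> cc_state \<Rightarrow> (nat \<Rightarrow> nat) \<Rightarrow> cc_state"
    \<comment> \<open>n, a, own ID, state, received messages (by sender) \<open>\<mapsto>\<close> new state\<close>

text \<open>Bandwidth: every message sent between two vertices is below (n+2)^c,
  i.e. has at most c * log(n+2) = O(log n) bits, for a constant c.\<close>

definition cc_bandwidth :: "cc_alg \<Rightarrow> nat \<Rightarrow> bool" where
  "cc_bandwidth A c \<longleftrightarrow>
     (\<forall>n a v s w. v < n \<longrightarrow> w < n \<longrightarrow> cc_msg A n a v s w < (n + 2) ^ c)"

fun cc_run :: "cc_alg \<Rightarrow> nat \<Rightarrow> nat \<Rightarrow> (nat \<Rightarrow> nat \<Rightarrow> bool) \<Rightarrow> nat \<Rightarrow> nat \<Rightarrow> cc_state" where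
  "cc_run A n a E 0 = (\<lambda>v. cc_init A n a v (E v))"
| "cc_run A n a E (Suc r) = (\<lambda>v. cc_trans A n a v (cc_run A n a E r v)
      (\<lambda>u. if u < n then cc_msg A n a u (cc_run A n a E r u) v else 0))"

end

theory Submission
  imports Defs "HOL-Library.Countable"
begin

text \<open>A forest on \<open>n\<close> vertices has at most \<open>n\<close> edges, so a graph of arboricity \<open>a\<close> has at
  most \<open>a n\<close> edges and the concatenation of all adjacency lists has length at most \<open>2 a n\<close>.
  After one round in which every vertex broadcasts its degree, every vertex knows where its own
  list sits in this concatenation. Entry \<open>j\<close> of the concatenation is then sent by its owner
  to vertex \<open>j mod n\<close> in round \<open>1 + j div n\<close>; in these \<open>2 a\<close> rounds every vertex receives at
  most one entry per round, and in another \<open>2 a\<close> rounds it broadcasts these entries to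
  everybody. After \<open>4 a + 1 \<le> 5 a\<close> rounds each vertex knows the whole graph and can compute
  any function of it locally.\<close>

definition simple_path :: "nat set set \<Rightarrow> nat set \<Rightarrow> nat list \<Rightarrow> bool" where
  "simple_path F V p \<longleftrightarrow> p \<noteq> [] \<and> distinct p \<and> set p \<subseteq> V \<and>
     (\<forall>i. Suc i < length p \<longrightarrow> {p ! i, p ! Suc i} \<in> F)"

lemma longest_simple_path:
  assumes "finite V" and "x \<in> V"
  obtains p where "simple_path F V p" and "\<And>q. simple_path F V q \<Longrightarrow> length q \<le> length p"
proof -
  have "\<exists>k. (\<exists>p. simple_path F V p \<and> length p = k) \<and>
      (\<forall>k'. (\<exists>p. simple_path F V p \<and> length p = k') \<longrightarrow> k' \<le> k)"
  proof (rule Nat.ex_has_greatest_nat[where b = "card V"])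
    show "\<exists>p. simple_path F V p \<and> length p = 1"
      using \<open>x \<in> V\<close> by (intro exI[of _ "[x]"]) (simp add: simple_path_def)
    show "\<forall>k. (\<exists>p. simple_path F V p \<and> length p = k) \<longrightarrow> k \<le> card V"
      using \<open>finite V\<close> by (metis card_mono distinct_card simple_path_def)
  qed
  then show thesis
    using that by blast
qed

lemma simple_path_Cons:
  assumes "simple_path F V p" "y \<notin> set p" "y \<in> V" "{y, hd p} \<in> F"
  shows "simple_path F V (y # p)"
  unfolding simple_path_def
proof (intro conjI allI impI)
  fix i assume "Suc i < length (y # p)"
  then show "{(y # p) ! i, (y # p) ! Suc i} \<in> F"
    using assms by (cases i) (auto simp: simple_path_def hd_conv_nth)
qed (use assms in \<open>auto simp: simple_path_def\<close>)

lemma has_cycle_closing_edge: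
  assumes p: "simple_path F V p" and i: "2 \<le> i" "i < length p" and closing: "{p ! i, p ! 0} \<in> F"
  shows "has_cycle F"
  unfolding has_cycle_def
proof (intro exI[of _ "take (Suc i) p"] conjI allI impI)
  have len: "length (take (Suc i) p) = Suc i"
    using i by simp
  then show "3 \<le> length (take (Suc i) p)" "distinct (take (Suc i) p)"
    using i p by (simp_all add: simple_path_def)
  fix l assume l: "l < length (take (Suc i) p)"
  show "{take (Suc i) p ! l, take (Suc i) p ! ((l + 1) mod length (take (Suc i) p))} \<in> F"
  proof (cases "l = i")
    case True
    then show ?thesis using closing len by simp
  next
    case False
    then show ?thesis using l len i p by (simp add: simple_path_def)
  qed
qed

text \<open>The endpoint of a longest path has a neighbour other than its successor on the path; by
  maximality that neighbour lies on the path, closing a cycle.\<close>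

lemma has_cycle_if_min_degree_2:
  assumes "finite V" "V \<noteq> {}" and edges: "\<forall>e\<in>F. card e = 2" "\<Union>F \<subseteq> V"
    and degree: "\<forall>x\<in>V. 2 \<le> card {e\<in>F. x \<in> e}"
  shows "has_cycle F"
proof -
  obtain p where p: "simple_path F V p" and longest: "\<And>q. simple_path F V q \<Longrightarrow> length q \<le> length p"
    using longest_simple_path assms(1,2) by blast
  define x where "x = hd p"
  have "x \<in> V"
    using p by (auto simp: simple_path_def x_def)
  have "\<not> {e\<in>F. x \<in> e} \<subseteq> {{x, p ! 1}}"
  proof
    assume "{e\<in>F. x \<in> e} \<subseteq> {{x, p ! 1}}"
    then have "card {e\<in>F. x \<in> e} \<le> 1"
      using card_mono[of "{{x, p ! 1}}"] by fastforce
    then show False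
      using degree \<open>x \<in> V\<close> by fastforce
  qed
  then obtain e where e: "e \<in> F" "x \<in> e" "e \<noteq> {x, p ! 1}"
    by blast
  obtain y where y: "e = {x, y}" "y \<noteq> x"
    using edges(1) e by (metis card_2_iff insert_commute insert_iff singletonD)
  have "y \<in> set p"
  proof (rule ccontr)
    assume "y \<notin> set p"
    then have "simple_path F V (y # p)"
      using p e y edges(2) by (intro simple_path_Cons) (auto simp: x_def insert_commute)
    then show False
      using longest[of "y # p"] by simp
  qed
  then obtain i where i: "i < length p" "p ! i = y"
    by (metis in_set_conv_nth)
  have "p ! 0 = x"
    using p by (simp add: simple_path_def x_def hd_conv_nth)
  then have "i \<noteq> 0" "i \<noteq> 1"
    using i y e by auto
  then show ?thesis
    using has_cycle_closing_edge[OF p _ i(1)] i \<open>p ! 0 = x\<close> e y by (simp add: insert_commute)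
qed

lemma has_cycle_mono: "has_cycle F' \<Longrightarrow> F' \<subseteq> F \<Longrightarrow> has_cycle F"
  unfolding has_cycle_def by blast

lemma card_forest_le:
  assumes "finite V" "forest F" "\<Union>F \<subseteq> V"
  shows "card F \<le> card V"
  using assms
proof (induction "card V" arbitrary: V F rule: less_induct)
  case less
  show ?case
  proof (cases "\<exists>x\<in>V. card {e\<in>F. x \<in> e} \<le> 1")
    case True
    then obtain x where x: "x \<in> V" "card {e\<in>F. x \<in> e} \<le> 1"
      by blast
    define F' where "F' = {e\<in>F. x \<notin> e}"
    have "forest F'"
      using less.prems(2) has_cycle_mono[of F' F] by (auto simp: forest_def F'_def)
    moreover have "\<Union>F' \<subseteq> V - {x}"
      using less.prems(3) by (auto simp: F'_def)
    moreover have "card (V - {x}) < card V"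
      using less.prems(1) x(1) by (rule card_Diff1_less)
    ultimately have "card F' \<le> card (V - {x})"
      using less.hyps less.prems(1) by blast
    moreover have "F = F' \<union> {e\<in>F. x \<in> e}"
      by (auto simp: F'_def)
    then have "card F \<le> card F' + card {e\<in>F. x \<in> e}"
      by (metis card_Un_le)
    moreover have "0 < card V"
      using x(1) less.prems(1) card_gt_0_iff by blast
    moreover have "card (V - {x}) = card V - 1"
      using x(1) by (rule card_Diff_singleton)
    ultimately show ?thesis
      using x(2) by linarith
  next
    case False
    have edges: "\<forall>e\<in>F. card e = 2" and acyclic: "\<not> has_cycle F"
      using less.prems(2) by (auto simp: forest_def)
    have "V = {}"
    proof (rule ccontr)
      assume "V \<noteq> {}"
      moreover have "\<forall>x\<in>V. 2 \<le> card {e\<in>F. x \<in> e}"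
        using False by auto
      ultimately show False
        using has_cycle_if_min_degree_2[OF less.prems(1) _ edges less.prems(3)] acyclic by blast
    qed
    then have "F \<subseteq> {{}}"
      using less.prems(3) by blast
    then have "F = {}"
      using edges by fastforce
    then show ?thesis
      by simp
  qed
qed

lemma card_graph_edge:
  assumes "simple_graph n E" "e \<in> graph_edges E"
  shows "card e = 2"
  using assms by (auto simp: simple_graph_def graph_edges_def)

lemma graph_edges_subset: "simple_graph n E \<Longrightarrow> \<Union>(graph_edges E) \<subseteq> {..<n}"
  unfolding simple_graph_def graph_edges_def by auto

lemma finite_graph_edges: "simple_graph n E \<Longrightarrow> finite (graph_edges E)"
  by (rule finite_subset[of _ "Pow {..<n}"]) (use graph_edges_subset in auto)

lemma forest_singleton:
  assumes "card e = 2"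
  shows "forest {e}"
proof -
  have "\<not> has_cycle {e}"
  proof
    assume "has_cycle {e}"
    then obtain vs where vs: "3 \<le> length vs" "distinct vs"
        "\<forall>i < length vs. {vs ! i, vs ! ((i + 1) mod length vs)} = e"
      unfolding has_cycle_def by auto
    have "vs \<noteq> []"
      using vs(1) by auto
    then have "{vs ! 0, vs ! 1} = e" "{vs ! 1, vs ! 2} = e"
      using vs(1) spec[OF vs(3), of 0] spec[OF vs(3), of 1] by (simp_all add: numeral_2_eq_2)
    then have sub: "{vs ! 0, vs ! 1, vs ! 2} \<subseteq> e"
      by blast
    have "vs ! i \<noteq> vs ! j" if "i < 3" "j < 3" "i \<noteq> j" for i j
      using that vs(1,2) nth_eq_iff_index_eq by fastforce
    then have "distinct [vs ! 0, vs ! 1, vs ! 2]"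
      by simp
    then have "card {vs ! 0, vs ! 1, vs ! 2} = 3"
      using distinct_card by fastforce
    moreover have "finite e"
      using assms by (intro card_ge_0_finite) simp
    ultimately show False
      using card_mono[OF _ sub] assms by simp
  qed
  then show ?thesis
    using assms by (simp add: forest_def)
qed

lemma arboricity_forest_cover:
  assumes "simple_graph n E"
  obtains F where "\<forall>i < arboricity E. forest (F i)" "(\<Union>i < arboricity E. F i) = graph_edges E"
proof -
  obtain es where es: "set es = graph_edges E"
    using finite_graph_edges[OF assms] finite_list by blast
  have "\<forall>i < length es. forest {es ! i}"
    using es card_graph_edge[OF assms] nth_mem forest_singleton by blast
  moreover have "(\<Union>i < length es. {es ! i}) = graph_edges E"
    unfolding es[symmetric] by (auto simp: in_set_conv_nth)
  ultimately have "\<exists>F. (\<forall>i < length es. forest (F i)) \<and> (\<Union>i < length es. F i) = graph_edges E"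
    by (intro exI[of _ "\<lambda>i. {es ! i}"]) simp
  then have "\<exists>F. (\<forall>i < arboricity E. forest (F i)) \<and> (\<Union>i < arboricity E. F i) = graph_edges E"
    unfolding arboricity_def
    by (rule LeastI[where P = "\<lambda>k. \<exists>F. (\<forall>i < k. forest (F i)) \<and> (\<Union>i < k. F i) = graph_edges E"])
  then show thesis
    using that by blast
qed

lemma card_graph_edges_le:
  assumes "simple_graph n E"
  shows "card (graph_edges E) \<le> arboricity E * n"
proof -
  obtain F where F: "\<forall>i < arboricity E. forest (F i)" "(\<Union>i < arboricity E. F i) = graph_edges E"
    using arboricity_forest_cover[OF assms] by blast
  have "card (graph_edges E) \<le> (\<Sum>i < arboricity E. card (F i))"
    using F(2) card_UN_le[of "{..<arboricity E}" F] by simp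
  also have "\<dots> \<le> (\<Sum>i < arboricity E. n)"
  proof (rule sum_mono)
    fix i assume i: "i \<in> {..<arboricity E}"
    have "\<Union>(F i) \<subseteq> {..<n}"
      using F(2) graph_edges_subset[OF assms] i by blast
    then show "card (F i) \<le> n"
      using card_forest_le[of "{..<n}" "F i"] F(1) i by simp
  qed
  finally show ?thesis
    by simp
qed

lemma sum_degrees_le:
  assumes "simple_graph n E"
  shows "(\<Sum>x<n. card {y. y < n \<and> E x y}) \<le> 2 * card (graph_edges E)"
proof -
  define arcs where "arcs = (\<Union>e\<in>graph_edges E. {(x, y). {x, y} = e \<and> E x y})"
  have "(\<Sum>x<n. card {y. y < n \<and> E x y}) = card (SIGMA x:{..<n}. {y. y < n \<and> E x y})"
    by (rule card_SigmaI[symmetric]) auto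
  also have "\<dots> \<le> card arcs"
  proof (rule card_mono)
    show "finite arcs"
    proof (rule finite_subset[of _ "{..<n} \<times> {..<n}"])
      show "arcs \<subseteq> {..<n} \<times> {..<n}"
        using assms unfolding simple_graph_def arcs_def by blast
    qed simp
    show "(SIGMA x:{..<n}. {y. y < n \<and> E x y}) \<subseteq> arcs"
      unfolding graph_edges_def arcs_def by blast
  qed
  also have "\<dots> \<le> (\<Sum>e\<in>graph_edges E. card {(x, y). {x, y} = e \<and> E x y})"
    unfolding arcs_def by (rule card_UN_le) (rule finite_graph_edges[OF assms])
  also have "\<dots> \<le> (\<Sum>e\<in>graph_edges E. 2)"
  proof (rule sum_mono)
    fix e assume "e \<in> graph_edges E"
    then obtain u v where e: "e = {u, v}"
      unfolding graph_edges_def by blast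
    have "{(x, y). {x, y} = e \<and> E x y} \<subseteq> {(u, v), (v, u)}"
      using e by (auto simp: doubleton_eq_iff)
    then have "card {(x, y). {x, y} = e \<and> E x y} \<le> card {(u, v), (v, u)}"
      by (rule card_mono[rotated]) simp
    also have "\<dots> \<le> 2"
      by (cases "u = v") auto
    finally show "card {(x, y). {x, y} = e \<and> E x y} \<le> 2" .
  qed
  finally show ?thesis
    by simp
qed

text \<open>A vertex's view: its ID, \<open>a\<close>, its sorted neighbour list, and the messages received so far
  (one row per round, indexed by sender).\<close>

type_synonym local_view = "nat \<times> nat \<times> nat list \<times> nat list list"

definition encode_view :: "local_view \<Rightarrow> cc_state" where
  "encode_view x = [to_nat x]"

definition decode_view :: "cc_state \<Rightarrow> local_view" where
  "decode_view s = from_nat (hd s)"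

lemma decode_encode_view [simp]: "decode_view (encode_view x) = x"
  by (simp add: encode_view_def decode_view_def)

definition neighbours :: "nat \<Rightarrow> (nat \<Rightarrow> bool) \<Rightarrow> nat list" where
  "neighbours n adj = sorted_list_of_set {u. u < n \<and> adj u}"

lemma set_neighbours: "set (neighbours n adj) = {u. u < n \<and> adj u}"
  by (simp add: neighbours_def)

text \<open>The message a vertex sends in round \<open>t\<close> (the length of its history): its degree in round 0;
  in rounds \<open>1..2a\<close> entry \<open>j = (t - 1) n + w\<close> of the concatenated adjacency lists, if it owns
  it; in rounds \<open>2a+1..4a\<close> the sum of the row received in round \<open>t - 2a\<close>, which has at most one
  nonzero entry. Neighbours are sent as \<open>y + 1\<close>, so that \<open>0\<close> means no entry.\<close>

definition view_msg :: "nat \<Rightarrow> nat \<Rightarrow> nat \<Rightarrow> local_view \<Rightarrow> nat \<Rightarrow> nat" where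
  "view_msg n a u view w = (case view of (v, b, nb, hist) \<Rightarrow>
     (let t = length hist in
      if t = 0 then length nb
      else if t \<le> 2 * a then
        (let j = (t - 1) * n + w; off = sum_list (take u (hist ! 0)) in
          if off \<le> j \<and> j < off + length nb then nb ! (j - off) + 1 else 0)
      else if t \<le> 4 * a then sum_list (hist ! (t - 2 * a))
      else 0))"

text \<open>The cap at \<open>n + 1\<close> enforces the bandwidth bound on arbitrary states; on actual runs it
  is never active.\<close>

definition gather_alg :: cc_alg where
  "gather_alg = \<lparr>
     cc_init = (\<lambda>n a v adj. encode_view (v, a, neighbours n adj, [])),
     cc_msg = (\<lambda>n a u s w. min (view_msg n a u (decode_view s) w) (n + 1)),
     cc_trans = (\<lambda>n a v s m. case decode_view s of (v', b, nb, hist) \<Rightarrow>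
        encode_view (v', b, nb, hist @ [map m [0..<n]])) \<rparr>"

definition view_graph :: "local_view \<Rightarrow> nat \<Rightarrow> nat \<Rightarrow> bool" where
  "view_graph view x y = (case view of (v, a, nb, hist) \<Rightarrow>
     (let degs = hist ! 0; n = length degs; off = sum_list (take x degs) in
      x < n \<and> (\<exists>k < degs ! x. hist ! (2 * a + 1 + (off + k) div n) ! ((off + k) mod n) = y + 1)))"

definition view_output :: "(nat \<Rightarrow> (nat \<Rightarrow> nat \<Rightarrow> bool) \<Rightarrow> nat \<Rightarrow> 'o) \<Rightarrow> cc_state \<Rightarrow> 'o" where
  "view_output P s = (case decode_view s of (v, a, nb, hist) \<Rightarrow>
     P (length (hist ! 0)) (view_graph (decode_view s)) v)"

lemma gather_trans:
  "cc_trans gather_alg n a v (encode_view (v', b, nb, hist)) m = encode_view (v', b, nb, hist @ [map m [0..<n]])"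
  by (simp add: gather_alg_def)

lemma gather_bandwidth: "cc_bandwidth gather_alg 1"
  by (auto simp: cc_bandwidth_def gather_alg_def min_def)

locale gather_run =
  fixes n a :: nat and E :: "nat \<Rightarrow> nat \<Rightarrow> bool"
begin

definition degree :: "nat \<Rightarrow> nat" where
  "degree x = length (neighbours n (E x))"

definition offset :: "nat \<Rightarrow> nat" where
  "offset x = (\<Sum>i<x. degree i)"

definition scatter_item :: "nat \<Rightarrow> nat \<Rightarrow> nat \<Rightarrow> nat" where
  "scatter_item t x w = (let j = (t - 1) * n + w in
     if offset x \<le> j \<and> j < offset x + degree x then neighbours n (E x) ! (j - offset x) + 1 else 0)"

definition round_msg :: "nat \<Rightarrow> nat \<Rightarrow> nat \<Rightarrow> nat" where
  "round_msg t u w = min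
     (if t = 0 then degree u
      else if t \<le> 2 * a then scatter_item t u w
      else if t \<le> 4 * a then sum_list (map (\<lambda>x. scatter_item (t - 2 * a) x u) [0..<n])
      else 0) (n + 1)"

definition received :: "nat \<Rightarrow> nat \<Rightarrow> nat list list" where
  "received w r = map (\<lambda>t. map (\<lambda>x. round_msg t x w) [0..<n]) [0..<r]"

lemma degree_le: "degree x \<le> n"
proof -
  have "degree x = card {u. u < n \<and> E x u}"
    by (simp add: degree_def neighbours_def)
  also have "\<dots> \<le> card {..<n}"
    by (rule card_mono) auto
  finally show ?thesis
    by simp
qed

lemma neighbours_nth_less: "k < degree x \<Longrightarrow> neighbours n (E x) ! k < n"
  using nth_mem[of k "neighbours n (E x)"] set_neighbours[of n "E x"] by (auto simp: degree_def)

lemma scatter_item_le: "scatter_item t x w \<le> n"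
  using neighbours_nth_less by (auto simp: scatter_item_def Let_def Suc_le_eq)

lemma round_msg_0: "round_msg 0 x w = degree x"
  using degree_le[of x] by (simp add: round_msg_def)

lemma round_msg_scatter: "1 \<le> t \<Longrightarrow> t \<le> 2 * a \<Longrightarrow> round_msg t x w = scatter_item t x w"
  using scatter_item_le[of t x w] by (simp add: round_msg_def)

lemma length_received [simp]: "length (received w r) = r"
  by (simp add: received_def)

lemma received_eq_Nil_iff [simp]: "received w r = [] \<longleftrightarrow> r = 0"
  by (simp add: received_def)

lemma received_nth: "t < r \<Longrightarrow> received w r ! t = map (\<lambda>x. round_msg t x w) [0..<n]"
  by (simp add: received_def)

lemma received_degrees: "0 < r \<Longrightarrow> received w r ! 0 = map degree [0..<n]"
  by (simp add: received_nth round_msg_0)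

lemma sum_take_degrees: "x \<le> n \<Longrightarrow> sum_list (take x (map degree [0..<n])) = offset x"
  by (simp add: offset_def take_map atLeast0LessThan[symmetric] sum_list_map_eq_sum_count2
      sum_set_upt_conv_sum_list_nat[symmetric])

lemma gather_msg:
  assumes "x < n"
  shows "cc_msg gather_alg n a x (encode_view (x, a, neighbours n (E x), received x r)) w = round_msg r x w"
proof -
  consider "r = 0" | "1 \<le> r" "r \<le> 2 * a" | "2 * a < r" "r \<le> 4 * a" | "4 * a < r"
    by linarith
  then show ?thesis
  proof cases
    case 2
    then have "view_msg n a x (x, a, neighbours n (E x), received x r) w = scatter_item r x w"
      using assms received_degrees[of r x]
      by (simp add: view_msg_def sum_take_degrees scatter_item_def Let_def degree_def)
    then show ?thesis
      using 2 scatter_item_le[of r x w] by (simp add: gather_alg_def round_msg_scatter)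
  next
    case 3
    then have "received x r ! (r - 2 * a) = map (\<lambda>y. scatter_item (r - 2 * a) y x) [0..<n]"
      by (simp add: received_nth round_msg_scatter)
    then show ?thesis
      using 3 by (simp add: gather_alg_def view_msg_def round_msg_def)
  qed (simp_all add: gather_alg_def view_msg_def round_msg_def degree_def)
qed

lemma cc_run_gather_alg:
  "u < n \<Longrightarrow> cc_run gather_alg n a E r u = encode_view (u, a, neighbours n (E u), received u r)"
proof (induction r arbitrary: u)
  case 0
  then show ?case
    by (simp add: gather_alg_def received_def)
next
  case (Suc r)
  define msgs where "msgs = (\<lambda>x. if x < n then cc_msg gather_alg n a x (cc_run gather_alg n a E r x) u else 0)"
  have "map msgs [0..<n] = map (\<lambda>x. round_msg r x u) [0..<n]"
    using Suc.IH gather_msg by (simp add: msgs_def)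
  moreover have "cc_run gather_alg n a E (Suc r) u =
      cc_trans gather_alg n a u (encode_view (u, a, neighbours n (E u), received u r)) msgs"
    using Suc.IH[OF Suc.prems] by (simp add: msgs_def)
  ultimately show ?case
    by (simp only: gather_trans) (simp add: received_def)
qed

lemma offset_Suc: "offset (Suc x) = offset x + degree x"
  by (simp add: offset_def)

lemma offset_mono: "x \<le> y \<Longrightarrow> offset x \<le> offset y"
  unfolding offset_def by (rule sum_mono2) auto

lemma offset_interval_unique:
  assumes "k < degree x" and "offset y \<le> offset x + k" "offset x + k < offset y + degree y"
  shows "y = x"
proof (rule ccontr)
  assume "y \<noteq> x"
  then consider "Suc y \<le> x" | "Suc x \<le> y"
    by linarith
  then show False
  proof cases
    case 1
    then have "offset y + degree y \<le> offset x"
      using offset_mono by (metis offset_Suc)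
    then show False
      using assms(3) by simp
  next
    case 2
    then have "offset x + degree x \<le> offset y"
      using offset_mono by (metis offset_Suc)
    then show False
      using assms(1,2) by simp
  qed
qed

lemma sum_scatter_items:
  assumes "x < n" "k < degree x" "(t - 1) * n + w = offset x + k"
  shows "sum_list (map (\<lambda>y. scatter_item t y w) [0..<n]) = neighbours n (E x) ! k + 1"
proof -
  have others: "scatter_item t y w = 0" if "y \<in> {..<n} - {x}" for y
  proof -
    have "\<not> (offset y \<le> offset x + k \<and> offset x + k < offset y + degree y)"
      using that offset_interval_unique[OF assms(2)] by blast
    then show ?thesis
      using assms(3) by (simp add: scatter_item_def Let_def)
  qed
  have "sum_list (map (\<lambda>y. scatter_item t y w) [0..<n]) = (\<Sum>y<n. scatter_item t y w)"
    by (simp add: sum_list_map_eq_sum_count2 atLeast0LessThan[symmetric]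
        sum_set_upt_conv_sum_list_nat[symmetric])
  also have "\<dots> = scatter_item t x w + (\<Sum>y\<in>{..<n} - {x}. scatter_item t y w)"
    using assms(1) by (simp add: sum.remove)
  also have "\<dots> = neighbours n (E x) ! k + 1"
    using assms others by (simp add: scatter_item_def)
  finally show ?thesis .
qed

lemma received_broadcast:
  assumes "offset n \<le> 2 * a * n" "4 * a < r" "x < n" "k < degree x"
  defines "j \<equiv> offset x + k"
  shows "received w r ! (2 * a + 1 + j div n) ! (j mod n) = neighbours n (E x) ! k + 1"
proof -
  have "j < offset (Suc x)"
    using assms(4) by (simp add: j_def offset_Suc)
  also have "\<dots> \<le> 2 * a * n"
    using assms(1,3) offset_mono[of "Suc x" n] by simp
  finally have "j div n < 2 * a"
    using assms(3) by (simp add: less_mult_imp_div_less)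
  moreover have "(j div n) * n + j mod n = offset x + k"
    by (simp add: j_def)
  ultimately show ?thesis
    using assms(2,3,4) neighbours_nth_less[OF assms(4)]
      sum_scatter_items[OF assms(3,4), of "Suc (j div n)" "j mod n"]
    by (simp add: received_nth round_msg_def)
qed

lemma view_graph_received:
  assumes "simple_graph n E" "offset n \<le> 2 * a * n" "4 * a < r"
  shows "view_graph (v, a, nb, received w r) = E"
proof (intro ext)
  fix x y
  have degrees: "received w r ! 0 = map degree [0..<n]"
    using assms(3) received_degrees by simp
  show "view_graph (v, a, nb, received w r) x y = E x y"
  proof (cases "x < n")
    case True
    then have "view_graph (v, a, nb, received w r) x y \<longleftrightarrow> (\<exists>k < degree x. neighbours n (E x) ! k = y)"
      using received_broadcast[OF assms(2,3) True] degrees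
      by (auto simp: view_graph_def sum_take_degrees Let_def)
    also have "\<dots> \<longleftrightarrow> y \<in> set (neighbours n (E x))"
      by (auto simp: degree_def in_set_conv_nth)
    also have "\<dots> \<longleftrightarrow> E x y"
      using assms(1) by (auto simp: set_neighbours simple_graph_def)
    finally show ?thesis .
  next
    case False
    then show ?thesis
      using assms(1) degrees by (auto simp: view_graph_def simple_graph_def)
  qed
qed

end

lemma gather_offset_le:
  assumes "simple_graph n E" "card (graph_edges E) \<le> a * n"
  shows "gather_run.offset n E n \<le> 2 * a * n"
proof -
  have "gather_run.offset n E n = (\<Sum>x<n. card {y. y < n \<and> E x y})"
    by (simp add: gather_run.offset_def gather_run.degree_def neighbours_def)
  also have "\<dots> \<le> 2 * card (graph_edges E)"
    by (rule sum_degrees_le[OF assms(1)])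
  finally show ?thesis
    using assms(2) by simp
qed

lemma gather_learns_graph:
  assumes "simple_graph n E" "card (graph_edges E) \<le> a * n" "0 < a" "v < n"
  shows "view_graph (decode_view (cc_run gather_alg n a E (5 * a) v)) = E"
  using gather_run.view_graph_received[OF assms(1) gather_offset_le[OF assms(1,2)]] assms(3,4)
  by (simp add: gather_run.cc_run_gather_alg)

lemma gather_output:
  assumes "simple_graph n E" "card (graph_edges E) \<le> a * n" "0 < a" "v < n"
  shows "view_output P (cc_run gather_alg n a E (5 * a) v) = P n E v"
  using gather_learns_graph[OF assms] assms(3,4)
  by (simp add: view_output_def gather_run.cc_run_gather_alg gather_run.received_degrees)

theorem mainTheorem7:
  shows "(\<exists>(A :: cc_alg) (c :: nat) (C :: nat) (R :: nat \<Rightarrow> nat \<Rightarrow> nat)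
            (know :: cc_state \<Rightarrow> nat \<Rightarrow> nat \<Rightarrow> bool).
           cc_bandwidth A c \<and> (\<forall>n a. R n a \<le> C * a) \<and>
           (\<forall>n E a. simple_graph n E \<longrightarrow> arboricity E = a \<longrightarrow> 2 \<le> a \<longrightarrow>
              (\<forall>v < n. know (cc_run A n a E (R n a) v) = E)))
       \<and> (\<forall>P :: nat \<Rightarrow> (nat \<Rightarrow> nat \<Rightarrow> bool) \<Rightarrow> nat \<Rightarrow> 'o.
           \<exists>(A :: cc_alg) (c :: nat) (C :: nat) (R :: nat \<Rightarrow> nat \<Rightarrow> nat)
            (out :: cc_state \<Rightarrow> 'o).
           cc_bandwidth A c \<and> (\<forall>n a. R n a \<le> C * a) \<and>
           (\<forall>n E a. simple_graph n E \<longrightarrow> arboricity E = a \<longrightarrow> 2 \<le> a \<longrightarrow>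
              (\<forall>v < n. out (cc_run A n a E (R n a) v) = P n E v)))"
proof -
  have learns: "view_graph (decode_view (cc_run gather_alg n a E (5 * a) v)) = E"
    and outputs: "view_output P (cc_run gather_alg n a E (5 * a) v) = P n E v"
    if "simple_graph n E" "arboricity E = a" "2 \<le> a" "v < n"
    for n E a v and P :: "nat \<Rightarrow> (nat \<Rightarrow> nat \<Rightarrow> bool) \<Rightarrow> nat \<Rightarrow> 'o"
  proof -
    have "card (graph_edges E) \<le> a * n"
      using card_graph_edges_le[OF that(1)] that(2) by simp
    moreover have "0 < a"
      using that(3) by simp
    ultimately show "view_graph (decode_view (cc_run gather_alg n a E (5 * a) v)) = E"
      and "view_output P (cc_run gather_alg n a E (5 * a) v) = P n E v"
      using gather_learns_graph gather_output that(1,4) by blast+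
  qed
  show ?thesis
    apply (intro conjI allI)
    subgoal
      by (rule exI[of _ gather_alg], rule exI[of _ "1::nat"], rule exI[of _ "5::nat"], rule exI[of _ "\<lambda>_ a. 5 * a"],
          rule exI[of _ "\<lambda>s. view_graph (decode_view s)"], intro conjI gather_bandwidth)
        (simp_all add: learns)
    subgoal for P
      by (rule exI[of _ gather_alg], rule exI[of _ "1::nat"], rule exI[of _ "5::nat"], rule exI[of _ "\<lambda>_ a. 5 * a"],
          rule exI[of _ "view_output P"], intro conjI gather_bandwidth) (simp_all add: outputs)
    done
qed

end
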